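(* Let $d\in\{1,2,3,7,11\}$, $K=\mathbb{Q}(\sqrt{-d})$, $\mathcal{O}_d$ its ring of integers, and $\Delta$ a positive integer not of the form $\beta\bar\beta$ with $\beta\in\mathcal{O}_d$. Fix $z\in\mathbb{C}$ and a $\hat\Gamma_d$-equivalence class $\mathcal{A}\subset\mathcal{H}(\mathcal{O}_d,-\Delta)$. Put $\mathcal{A}(z)=\{h\in\mathcal{A}: a_h<0<h(z,1)\}$, $\hat{\mathcal{A}}=\{h\in\mathcal{A}: h(0,1)<0<a_h\}$, and $$\mathcal{B}(z)=\{(f,\gamma)\in\hat{\mathcal{A}}\times\hat\Gamma_d(z):\ f(\gamma(\infty),1)<0<f(\gamma(z),1)\}.$$ Then $\Phi(f,\gamma)=\bar\gamma(f)=\gamma^tf\bar\gamma$ defines a map $\Phi:\mathcal{B}(z)\to\mathcal{A}(z)$, and $\Phi$ is surjective.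
   Context: $\mathcal{H}(\mathcal{O}_d,-\Delta)$ is the set of Hermitian matrices $h=\begin{psmallmatrix}a_h&b_h\\\bar b_h&c_h\end{psmallmatrix}$ with $a_h,c_h\in\mathbb{Z}$, $b_h\in\mathcal{O}_d$ and $\det h=a_hc_h-b_h\bar b_h=-\Delta$; the associated form is $h(z,w)=a_h|z|^2+b_hz\bar w+\bar b_h\bar zw+c_h|w|^2$. $\hat\Gamma_d=\mathbf{PGL}(2,\mathcal{O}_d)$ acts by $\sigma(h)=\bar\sigma^th\sigma$. For $\gamma=\begin{psmallmatrix}r&s\\t&v\end{psmallmatrix}$, $\gamma(z)=\frac{rz+s}{tz+v}$ and $\gamma(\infty)=r/t$. Continued fraction of $z$: let $\lfloor w\rceil$ be the element of $\mathcal{O}_d$ nearest to $w$ (ties broken by a fixed rule); $z_0=z$, $\alpha_n=\lfloor z_n\rceil$, $z_{n+1}=1/(z_n-\alpha_n)$, stopping if $z_n=\alpha_n$ (this happens iff $z\in K$). Set $p_{-2}=0,p_{-1}=1,p_n=\alpha_np_{n-1}+p_{n-2}$ and $q_{-2}=1,q_{-1}=0,q_n=\alpha_nq_{n-1}+q_{n-2}$. Then $\hat\Gamma_d(z)$ is the set of matrices $\gamma_n=\begin{psmallmatrix}q_{n-2}&-p_{n-2}\\-q_{n-1}&p_{n-1}\end{psmallmatrix}$ for $n\ge1$ (for which $p_{n-1},q_{n-1}$ are defined). *)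

theory Defs
  imports Complex_Main "HOL-Library.Extended_Real"
begin

definition omega :: "nat \<Rightarrow> complex" where
  "omega d = (if d mod 4 = 3 then (1 + \<i> * complex_of_real (sqrt (real d))) / 2
              else \<i> * complex_of_real (sqrt (real d)))"

definition Od :: "nat \<Rightarrow> complex set" where
  "Od d = {of_int m + of_int n * omega d | m n. True}"

definition is_unit_Od :: "nat \<Rightarrow> complex \<Rightarrow> bool" where
  "is_unit_Od d u \<longleftrightarrow> u \<in> Od d \<and> (\<exists>w \<in> Od d. u * w = 1)"

section \<open>2x2 complex matrices (r, s, t, v) = [[r, s], [t, v]]\<close>

type_synonym cmat = "complex \<times> complex \<times> complex \<times> complex"

fun mmult :: "cmat \<Rightarrow> cmat \<Rightarrow> cmat" where
  "mmult (r, s, t, v) (r', s', t', v') =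
     (r * r' + s * t', r * s' + s * v', t * r' + v * t', t * s' + v * v')"

fun mtrans :: "cmat \<Rightarrow> cmat" where
  "mtrans (r, s, t, v) = (r, t, s, v)"

fun mconj :: "cmat \<Rightarrow> cmat" where
  "mconj (r, s, t, v) = (cnj r, cnj s, cnj t, cnj v)"

fun mdet :: "cmat \<Rightarrow> complex" where
  "mdet (r, s, t, v) = r * v - s * t"

fun entries :: "cmat \<Rightarrow> complex set" where
  "entries (r, s, t, v) = {r, s, t, v}"

text \<open>GL(2, O_d); its action on Hermitian matrices factors through PGL(2, O_d).\<close>
definition GL2 :: "nat \<Rightarrow> cmat set" where
  "GL2 d = {g. entries g \<subseteq> Od d \<and> is_unit_Od d (mdet g)}"

definition act :: "cmat \<Rightarrow> cmat \<Rightarrow> cmat" where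
  "act \<sigma> h = mmult (mmult (mtrans (mconj \<sigma>)) h) \<sigma>"

fun ha :: "cmat \<Rightarrow> complex" where "ha (a, b, b', c) = a"

definition Herm :: "nat \<Rightarrow> int \<Rightarrow> cmat set" where
  "Herm d \<Delta> = {(a, b, b', c) | a b b' c. a \<in> \<int> \<and> c \<in> \<int> \<and> b \<in> Od d \<and> b' = cnj b
                    \<and> a * c - b * b' = - of_int \<Delta>}"

fun hval :: "cmat \<Rightarrow> complex \<Rightarrow> complex \<Rightarrow> real" where
  "hval (a, b, b', c) z w = Re (a * z * cnj z + b * z * cnj w + b' * cnj z * w + c * w * cnj w)"

text \<open>Value of h(x,1) at a point x of the Riemann sphere (None = infinity);
  at infinity we use the limit value, +inf if a_h > 0 and -inf if a_h < 0.\<close>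
fun hval_ext :: "cmat \<Rightarrow> complex option \<Rightarrow> ereal" where
  "hval_ext h (Some x) = ereal (hval h x 1)"
| "hval_ext h None = (if Re (ha h) > 0 then \<infinity> else if Re (ha h) < 0 then - \<infinity> else 0)"

fun mob :: "cmat \<Rightarrow> complex option \<Rightarrow> complex option" where
  "mob (r, s, t, v) None = (if t = 0 then None else Some (r / t))"
| "mob (r, s, t, v) (Some z) =
     (if t * z + v = 0 then None else Some ((r * z + s) / (t * z + v)))"

definition nearest_rounding :: "nat \<Rightarrow> (complex \<Rightarrow> complex) \<Rightarrow> bool" where
  "nearest_rounding d rd \<longleftrightarrow>
     (\<forall>w. rd w \<in> Od d \<and> (\<forall>\<beta> \<in> Od d. cmod (w - rd w) \<le> cmod (w - \<beta>)))"

primrec cf_z :: "(complex \<Rightarrow> complex) \<Rightarrow> complex \<Rightarrow> nat \<Rightarrow> complex" where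
  "cf_z rd z 0 = z"
| "cf_z rd z (Suc n) = 1 / (cf_z rd z n - rd (cf_z rd z n))"

definition cf_alpha :: "(complex \<Rightarrow> complex) \<Rightarrow> complex \<Rightarrow> nat \<Rightarrow> complex" where
  "cf_alpha rd z n = rd (cf_z rd z n)"

text \<open>alpha_n is defined iff the algorithm did not stop before step n.\<close>
definition cf_defined :: "(complex \<Rightarrow> complex) \<Rightarrow> complex \<Rightarrow> nat \<Rightarrow> bool" where
  "cf_defined rd z n \<longleftrightarrow> (\<forall>k < n. cf_z rd z k \<noteq> cf_alpha rd z k)"

text \<open>Shifted indices: cfP rd z m = p_(m-2), cfQ rd z m = q_(m-2).\<close>
fun cfP :: "(complex \<Rightarrow> complex) \<Rightarrow> complex \<Rightarrow> nat \<Rightarrow> complex" where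
  "cfP rd z 0 = 0"
| "cfP rd z (Suc 0) = 1"
| "cfP rd z (Suc (Suc m)) = cf_alpha rd z m * cfP rd z (Suc m) + cfP rd z m"

fun cfQ :: "(complex \<Rightarrow> complex) \<Rightarrow> complex \<Rightarrow> nat \<Rightarrow> complex" where
  "cfQ rd z 0 = 1"
| "cfQ rd z (Suc 0) = 0"
| "cfQ rd z (Suc (Suc m)) = cf_alpha rd z m * cfQ rd z (Suc m) + cfQ rd z m"

text \<open>gamma_n = [[q_(n-2), -p_(n-2)], [-q_(n-1), p_(n-1)]] for n \<ge> 1 with p_(n-1), q_(n-1) defined.\<close>
definition Gamma_z :: "(complex \<Rightarrow> complex) \<Rightarrow> complex \<Rightarrow> cmat set" where
  "Gamma_z rd z = {(cfQ rd z n, - cfP rd z n, - cfQ rd z (Suc n), cfP rd z (Suc n)) | n.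
                    1 \<le> n \<and> cf_defined rd z (n - 1)}"

end

theory Submission
  imports Defs
begin

(* For gamma = (r, s, t, v) in Gamma(z) and h = Phi(f, gamma) one has a_h = f(r, t) and
   h(z, 1) = f(rz + s, tz + v), which are f(gamma(infinity), 1) and f(gamma(z), 1) up to positive
   factors (or, at infinity, have the sign of a_f > 0).

   Conversely let h be in A(z). Every point of C lies within distance sqrt(15/16) of O_d for the
   listed d, so the convergents satisfy |q_n z - p_n|^2 <= (15/16)^(n+1) and h(p_n, q_n) > 0 for
   large n, while h(p_(-1), q_(-1)) = a_h < 0. Take n minimal with h(p_n, q_n) > 0: the unimodular
   matrix gamma = gamma_(n+1) built from two consecutive convergents gives f with Phi(f, gamma) = h,
   a_f = h(p_n, q_n) > 0 and f(0, 1) = h(p_(n-1), q_(n-1)) <= 0. This is strict because no form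
   of the class represents 0 on O_d^2 - {0}: otherwise Delta = |u/y|^2 would be a norm from K,
   hence, by the descent of Davenport and Cassels (which again uses that the covering radius of
   O_d is less than 1), a norm from O_d. *)

section \<open>The ring O_d\<close>

lemma Od_iff: "x \<in> Od d \<longleftrightarrow> (\<exists>m n. x = of_int m + of_int n * omega d)"
  by (auto simp: Od_def)

lemma Od_of_int: "of_int k \<in> Od d"
  unfolding Od_iff by (rule exI[of _ k], rule exI[of _ 0]) simp

lemma Od_0: "0 \<in> Od d" and Od_1: "1 \<in> Od d"
  using Od_of_int[of 0 d] Od_of_int[of 1 d] by auto

lemma omega_Od: "omega d \<in> Od d"
  unfolding Od_iff by (rule exI[of _ 0], rule exI[of _ 1]) simp

lemma Od_add: "x \<in> Od d \<Longrightarrow> y \<in> Od d \<Longrightarrow> x + y \<in> Od d"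
proof -
  assume "x \<in> Od d" "y \<in> Od d"
  then obtain m n m' n' where "x = of_int m + of_int n * omega d" "y = of_int m' + of_int n' * omega d"
    unfolding Od_iff by blast
  then have "x + y = of_int (m + m') + of_int (n + n') * omega d"
    by (simp add: algebra_simps)
  then show ?thesis unfolding Od_iff by blast
qed

lemma Od_of_int_mult: "x \<in> Od d \<Longrightarrow> of_int k * x \<in> Od d"
proof -
  assume "x \<in> Od d"
  then obtain m n where "x = of_int m + of_int n * omega d"
    unfolding Od_iff by blast
  then have "of_int k * x = of_int (k * m) + of_int (k * n) * omega d"
    by (simp add: algebra_simps)
  then show ?thesis unfolding Od_iff by blast
qed

lemma Od_uminus: "x \<in> Od d \<Longrightarrow> - x \<in> Od d"
  using Od_of_int_mult[of x d "-1"] by simp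

lemma Od_diff: "x \<in> Od d \<Longrightarrow> y \<in> Od d \<Longrightarrow> x - y \<in> Od d"
  using Od_add[of x d "- y"] Od_uminus[of y d] by simp

lemma omega_mult_omega_Od: "omega d * omega d \<in> Od d"
proof -
  define S where "S = complex_of_real (sqrt (real d))"
  have SS: "S * S = of_nat d"
    unfolding S_def of_real_mult[symmetric] by simp
  show ?thesis
  proof (cases "d mod 4 = 3")
    case True
    then have "4 dvd d + 1" by presburger
    then obtain k where k: "d + 1 = 4 * k" by (auto elim: dvdE)
    have om: "omega d = (1 + \<i> * S) / 2" using True by (simp add: omega_def S_def)
    have "(1 + \<i> * S) * (1 + \<i> * S) = 2 * (1 + \<i> * S) - (1 + S * S)"
      by (simp add: algebra_simps)
    then have "omega d * omega d = omega d - (of_nat d + 1) / 4"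
      unfolding om SS by (simp add: field_simps)
    also have "\<dots> = omega d - of_int (int k)"
      using arg_cong[OF k, of "of_nat :: nat \<Rightarrow> complex"] by (simp add: algebra_simps)
    finally have sq: "omega d * omega d = omega d - of_int (int k)" .
    show ?thesis
      unfolding sq by (intro Od_diff omega_Od Od_of_int)
  next
    case False
    then have "omega d * omega d = of_int (- int d)"
      by (simp add: omega_def S_def[symmetric] SS algebra_simps)
    then show ?thesis by (simp only: Od_of_int)
  qed
qed

lemma cnj_omega_Od: "cnj (omega d) \<in> Od d"
proof (cases "d mod 4 = 3")
  case True
  then have "cnj (omega d) = 1 - omega d"
    by (simp add: omega_def complex_eq_iff)
  then show ?thesis by (simp add: Od_diff Od_1 omega_Od)
next
  case False
  then have "cnj (omega d) = - omega d" by (simp add: omega_def)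
  then show ?thesis by (simp add: Od_uminus omega_Od)
qed

lemma Od_mult: "x \<in> Od d \<Longrightarrow> y \<in> Od d \<Longrightarrow> x * y \<in> Od d"
proof -
  assume "x \<in> Od d" "y \<in> Od d"
  then obtain m n m' n' where "x = of_int m + of_int n * omega d" "y = of_int m' + of_int n' * omega d"
    unfolding Od_iff by blast
  then have xy: "x * y = of_int (m * m') + of_int (m * n' + n * m') * omega d
                         + of_int (n * n') * (omega d * omega d)"
    by (simp add: algebra_simps)
  show ?thesis
    unfolding xy by (intro Od_add Od_of_int Od_of_int_mult omega_Od omega_mult_omega_Od)
qed

lemma Od_cnj: "x \<in> Od d \<Longrightarrow> cnj x \<in> Od d"
proof -
  assume "x \<in> Od d"
  then obtain m n where "x = of_int m + of_int n * omega d"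
    unfolding Od_iff by blast
  then have cx: "cnj x = of_int m + of_int n * cnj (omega d)" by simp
  show ?thesis
    unfolding cx by (intro Od_add Od_of_int Od_of_int_mult cnj_omega_Od)
qed

lemma Od_power: "x \<in> Od d \<Longrightarrow> x ^ n \<in> Od d"
  by (induction n) (simp_all add: Od_1 Od_mult)

lemma Od_Im_0_Ints:
  assumes "0 < d" "x \<in> Od d" "Im x = 0"
  shows "x \<in> \<int>"
proof -
  obtain m n where x: "x = of_int m + of_int n * omega d"
    using assms(2) unfolding Od_iff by blast
  have "0 < Im (omega d)" using assms(1) by (simp add: omega_def)
  then have "n = 0" using assms(3) by (simp add: x)
  then show ?thesis by (simp add: x)
qed

lemma Od_trace_Ints: "0 < d \<Longrightarrow> x \<in> Od d \<Longrightarrow> x + cnj x \<in> \<int>"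
  by (rule Od_Im_0_Ints[of d]) (simp_all add: Od_add Od_cnj)

lemma Od_norm_Ints: "0 < d \<Longrightarrow> x \<in> Od d \<Longrightarrow> x * cnj x \<in> \<int>"
  by (rule Od_Im_0_Ints[of d]) (simp_all add: Od_mult Od_cnj)

lemma Od_cmod_square_nat:
  assumes "0 < d" "x \<in> Od d"
  obtains k :: nat where "(cmod x)\<^sup>2 = of_nat k"
proof -
  have "(cmod x)\<^sup>2 \<in> \<int>"
    using Od_norm_Ints[OF assms] by (simp only: complex_norm_square[symmetric] of_real_in_Ints_iff)
  then have "(cmod x)\<^sup>2 \<in> \<nat>" by (simp add: Nats_altdef2)
  then show ?thesis using that by (auto elim: Nats_cases)
qed

lemma Od_norm_ge_1:
  assumes "0 < d" "x \<in> Od d" "x \<noteq> 0"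
  shows "1 \<le> cmod x"
proof -
  obtain k :: nat where k: "(cmod x)\<^sup>2 = of_nat k" using Od_cmod_square_nat[OF assms(1,2)] .
  have "0 < (cmod x)\<^sup>2" using assms(3) by simp
  then have "1 \<le> real k" unfolding k by simp
  then have "1 \<le> (cmod x)\<^sup>2" unfolding k .
  then show ?thesis using power2_le_imp_le[of 1 "cmod x"] by simp
qed

section \<open>Covering radius and the descent of Davenport and Cassels\<close>

lemma lattice_covering:
  fixes w \<omega> :: complex
  assumes "0 < Im \<omega>"
  shows "\<exists>m n :: int. (cmod (w - (of_int m + of_int n * \<omega>)))\<^sup>2 \<le> 1/4 + (Im \<omega>)\<^sup>2 / 4"
proof -
  define n where "n = round (Im w / Im \<omega>)"
  define m where "m = round (Re w - n * Re \<omega>)"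
  define e where "e = w - (of_int m + of_int n * \<omega>)"
  have "Re e = (Re w - n * Re \<omega>) - m" by (simp add: e_def)
  then have "\<bar>Re e\<bar> \<le> 1/2"
    using of_int_round_abs_le[of "Re w - n * Re \<omega>"] by (simp add: m_def abs_minus_commute)
  then have re: "(Re e)\<^sup>2 \<le> (1/2)\<^sup>2" by (simp add: abs_le_square_iff[symmetric])
  have "Im e = Im \<omega> * (Im w / Im \<omega> - n)" using assms by (simp add: e_def field_simps)
  moreover have "\<bar>Im w / Im \<omega> - n\<bar> \<le> 1/2"
    using of_int_round_abs_le[of "Im w / Im \<omega>"] by (simp add: n_def abs_minus_commute)
  ultimately have "\<bar>Im e\<bar> \<le> Im \<omega> / 2"
    using assms by (simp add: abs_mult mult_left_mono[of _ "1/2" "Im \<omega>", simplified])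
  then have im: "(Im e)\<^sup>2 \<le> (Im \<omega> / 2)\<^sup>2"
    using assms by (simp add: abs_le_square_iff[symmetric])
  have "(cmod e)\<^sup>2 \<le> 1/4 + (Im \<omega>)\<^sup>2 / 4"
    using re im by (simp add: cmod_power2 power_divide)
  then show ?thesis unfolding e_def by blast
qed

lemma Im_omega_square:
  "(Im (omega d))\<^sup>2 = (if d mod 4 = 3 then real d / 4 else real d)"
  by (simp add: omega_def power_divide)

lemma Od_covering:
  assumes "d \<in> {1, 2, 3, 7, 11}"
  shows "\<exists>\<beta>\<in>Od d. (cmod (w - \<beta>))\<^sup>2 \<le> 15/16"
proof -
  have "0 < Im (omega d)" using assms by (auto simp: omega_def)
  then obtain m n :: int
    where "(cmod (w - (of_int m + of_int n * omega d)))\<^sup>2 \<le> 1/4 + (Im (omega d))\<^sup>2 / 4"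
    using lattice_covering by blast
  moreover have "1/4 + (Im (omega d))\<^sup>2 / 4 \<le> 15/16"
    using assms by (auto simp: Im_omega_square)
  ultimately have "(cmod (w - (of_int m + of_int n * omega d)))\<^sup>2 \<le> 15/16" by linarith
  moreover have "of_int m + of_int n * omega d \<in> Od d" unfolding Od_iff by blast
  ultimately show ?thesis by blast
qed

lemma norm_descent_step:
  assumes d: "d \<in> {1, 2, 3, 7, 11}" and m: "0 < m" and x: "of_nat m * \<beta> \<in> Od d"
    and \<beta>: "\<beta> * cnj \<beta> = of_int \<Delta>" and not_Od: "\<beta> \<notin> Od d"
  shows "\<exists>m' \<beta>'. 0 < m' \<and> m' < m \<and> of_nat m' * \<beta>' \<in> Od d \<and> \<beta>' * cnj \<beta>' = of_int \<Delta>"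
proof -
  have d0: "0 < d" using d by auto
  obtain g where g: "g \<in> Od d" "(cmod (\<beta> - g))\<^sup>2 \<le> 15/16" using Od_covering[OF d] by blast
  define x where "x = of_nat m * \<beta>"
  define u where "u = g - \<beta>"
  have u0: "u \<noteq> 0" using g(1) not_Od by (auto simp: u_def)
  have norm_u: "of_real (real m * (cmod u)\<^sup>2) = of_nat m * (u * cnj u)"
    by (simp only: of_real_mult of_real_of_nat_eq complex_norm_square)
  also have "\<dots> = of_nat m * (g * cnj g) - (cnj x * g + cnj (cnj x * g)) + of_nat m * of_int \<Delta>"
    by (simp add: u_def x_def \<beta>[symmetric] algebra_simps)
  also have "\<dots> \<in> \<int>"
    using Od_norm_Ints[OF d0 g(1)] Od_trace_Ints[OF d0 Od_mult[OF Od_cnj[OF x[folded x_def]] g(1)]]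
    by (metis Ints_add Ints_diff Ints_mult Ints_of_nat Ints_of_int)
  finally have "real m * (cmod u)\<^sup>2 \<in> \<int>" by (simp only: of_real_in_Ints_iff)
  then obtain M :: int where M: "real m * (cmod u)\<^sup>2 = of_int M" by (auto elim: Ints_cases)
  have "0 < real m * (cmod u)\<^sup>2" using m u0 by simp
  moreover have "real m * (cmod u)\<^sup>2 < real m * 1"
    using m g(2) by (intro mult_strict_left_mono) (simp_all add: u_def norm_minus_commute)
  ultimately have M_bounds: "0 < M" "nat M < m" using M by linarith+
  (* beta' is the second intersection of the line through beta and g with the circle |x|^2 = Delta;
     clearing its denominator costs only the integer factor m |u|^2 < m. *)
  define \<beta>' where "\<beta>' = - cnj \<beta> * u / cnj u"
  have norm_\<beta>': "\<beta>' * cnj \<beta>' = of_int \<Delta>" using u0 \<beta> by (simp add: \<beta>'_def field_simps)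
  have "of_int M * \<beta>' = of_nat m * (u * cnj u) * \<beta>'"
    using norm_u by (simp add: M)
  also have "\<dots> = - (cnj x * u * u)" using u0 by (simp add: \<beta>'_def x_def field_simps)
  also have "\<dots> = - (cnj x * g ^ 2 - of_int (2 * int m * \<Delta>) * g + of_int \<Delta> * x)"
    by (simp add: u_def x_def \<beta>[symmetric] algebra_simps power2_eq_square)
  also have "\<dots> \<in> Od d"
    using x[folded x_def] g(1) by (intro Od_uminus Od_add Od_diff Od_mult Od_cnj Od_power Od_of_int_mult)
  finally have "of_nat (nat M) * \<beta>' \<in> Od d" using M_bounds(1) by simp
  then show ?thesis using M_bounds norm_\<beta>' by (intro exI[of _ "nat M"] exI[of _ \<beta>']) simp
qed

lemma norm_from_K_is_norm_from_Od:
  assumes d: "d \<in> {1, 2, 3, 7, 11}"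
  shows "0 < m \<Longrightarrow> of_nat m * \<beta> \<in> Od d \<Longrightarrow> \<beta> * cnj \<beta> = of_int \<Delta>
    \<Longrightarrow> \<exists>\<beta>'\<in>Od d. of_int \<Delta> = \<beta>' * cnj \<beta>'"
proof (induction m arbitrary: \<beta> rule: less_induct)
  case (less m)
  show ?case
  proof (cases "\<beta> \<in> Od d")
    case True
    then show ?thesis using less.prems(3) by (intro bexI[of _ \<beta>]) simp_all
  next
    case False
    then show ?thesis using norm_descent_step[OF d less.prems] less.IH by blast
  qed
qed

section \<open>Hermitian forms and the action of GL(2, O_d)\<close>

lemma hval_act:
  "hval (act (r, s, t, v) H) x y = hval H (cnj r * x + cnj s * y) (cnj t * x + cnj v * y)"
  by (cases H) (simp add: act_def algebra_simps)

lemma act_act: "act \<sigma> (act \<tau> H) = act (mmult \<tau> \<sigma>) H"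
  by (cases \<sigma>; cases \<tau>; cases H) (simp add: act_def algebra_simps)

lemma act_id: "act (1, 0, 0, 1) H = H"
  by (cases H) (simp add: act_def)

lemma hval_scale: "hval H (l * x) (l * y) = (cmod l)\<^sup>2 * hval H x y"
proof -
  obtain a b b' c where H: "H = (a, b, b', c)" by (cases H) auto
  have "hval H (l * x) (l * y)
      = Re ((l * cnj l) * (a * x * cnj x + b * x * cnj y + b' * cnj x * y + c * y * cnj y))"
    by (simp add: H algebra_simps)
  also have "l * cnj l = complex_of_real ((cmod l)\<^sup>2)" by (rule complex_norm_square[symmetric])
  finally show ?thesis by (simp add: H)
qed

lemma hval_1_0: "hval H 1 0 = Re (ha H)"
  by (cases H) simp

lemma hval_x_0: "hval H x 0 = (cmod x)\<^sup>2 * Re (ha H)"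
  using hval_scale[of H x 1 0] by (simp add: hval_1_0)

lemma hval_div: "w \<noteq> 0 \<Longrightarrow> hval H x w = (cmod w)\<^sup>2 * hval H (x / w) 1"
  using hval_scale[of H w "x / w" 1] by simp

lemma mdet_mmult: "mdet (mmult \<sigma> \<tau>) = mdet \<sigma> * mdet \<tau>"
  by (cases \<sigma>; cases \<tau>) (simp add: algebra_simps)

lemma is_unit_Od_mult: "is_unit_Od d u \<Longrightarrow> is_unit_Od d u' \<Longrightarrow> is_unit_Od d (u * u')"
  unfolding is_unit_Od_def
proof (elim conjE bexE, intro conjI bexI)
  fix w w' assume "u * w = 1" "u' * w' = 1"
  then show "u * u' * (w * w') = 1" by (metis mult.assoc mult.left_commute mult_1)
qed (auto intro: Od_mult)

lemma GL2_mmult: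
  assumes "\<sigma> \<in> GL2 d" "\<tau> \<in> GL2 d"
  shows "mmult \<sigma> \<tau> \<in> GL2 d"
proof -
  have "entries (mmult \<sigma> \<tau>) \<subseteq> Od d"
    using assms by (cases \<sigma>; cases \<tau>) (auto simp: GL2_def intro: Od_add Od_mult)
  moreover have "is_unit_Od d (mdet (mmult \<sigma> \<tau>))"
    using assms by (simp add: GL2_def mdet_mmult is_unit_Od_mult)
  ultimately show ?thesis by (simp add: GL2_def)
qed

lemma GL2_inverse:
  assumes "\<sigma> \<in> GL2 d"
  shows "\<exists>\<tau>\<in>GL2 d. mmult \<tau> \<sigma> = (1, 0, 0, 1)"
proof -
  obtain r s t v where \<sigma>: "\<sigma> = (r, s, t, v)" by (cases \<sigma>) auto
  have entries: "r \<in> Od d" "s \<in> Od d" "t \<in> Od d" "v \<in> Od d"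
    using assms by (auto simp: GL2_def \<sigma>)
  obtain w where w: "w \<in> Od d" "(r * v - s * t) * w = 1" "r * v - s * t \<in> Od d"
    using assms by (auto simp: GL2_def is_unit_Od_def \<sigma>)
  define \<tau> where "\<tau> = (w * v, - w * s, - w * t, w * r)"
  have "mmult \<tau> \<sigma> = (1, 0, 0, 1)"
    using w(2) by (simp add: \<tau>_def \<sigma> algebra_simps)
  moreover have "mdet \<tau> = w * ((r * v - s * t) * w)"
    by (simp add: \<tau>_def algebra_simps)
  then have "mdet \<tau> = w" using w(2) by simp
  then have "is_unit_Od d (mdet \<tau>)"
    using w unfolding is_unit_Od_def
    by (intro conjI bexI[of _ "r * v - s * t"]) (simp_all add: mult.commute)
  then have "\<tau> \<in> GL2 d"
    using w entries by (simp add: GL2_def \<tau>_def Od_mult Od_uminus del: mdet.simps)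
  ultimately show ?thesis by blast
qed

lemma GL2_intro:
  assumes "entries \<sigma> \<subseteq> Od d" "mdet \<sigma> \<in> {1, -1}"
  shows "\<sigma> \<in> GL2 d"
  using assms unfolding GL2_def is_unit_Od_def
  by (intro CollectI conjI bexI[of _ "mdet \<sigma>"]) (auto simp: Od_1 Od_uminus)

definition GL2_orbit :: "nat \<Rightarrow> cmat \<Rightarrow> cmat set" where
  "GL2_orbit d h0 = {act \<sigma> h0 | \<sigma>. \<sigma> \<in> GL2 d}"

lemma GL2_orbit_act: "h \<in> GL2_orbit d h0 \<Longrightarrow> \<tau> \<in> GL2 d \<Longrightarrow> act \<tau> h \<in> GL2_orbit d h0"
  unfolding GL2_orbit_def using act_act GL2_mmult by blast

definition Od_anisotropic :: "nat \<Rightarrow> cmat \<Rightarrow> bool" where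
  "Od_anisotropic d h \<longleftrightarrow> (\<forall>x\<in>Od d. \<forall>y\<in>Od d. x \<noteq> 0 \<or> y \<noteq> 0 \<longrightarrow> hval h x y \<noteq> 0)"

lemma Herm_complete_square:
  assumes "(a, b, b', c) \<in> Herm d \<Delta>"
  shows "Re a * hval (a, b, b', c) x y = (cmod (a * x + b' * y))\<^sup>2 - of_int \<Delta> * (cmod y)\<^sup>2"
proof -
  obtain A where A: "a = of_int A" and b': "b' = cnj b" and det: "a * c - b * b' = - of_int \<Delta>"
    using assms unfolding Herm_def by (auto elim!: Ints_cases)
  define X where "X = a * x * cnj x + b * x * cnj y + b' * cnj x * y + c * y * cnj y"
  have "a * X = (a * x + b' * y) * cnj (a * x + b' * y) + (a * c - b * b') * (y * cnj y)"
    by (simp add: X_def A b' algebra_simps)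
  also have "\<dots> = of_real ((cmod (a * x + b' * y))\<^sup>2 - of_int \<Delta> * (cmod y)\<^sup>2)"
    by (simp only: det complex_norm_square[symmetric] of_real_diff of_real_mult of_real_of_int_eq)
      simp
  finally have "Re (a * X) = (cmod (a * x + b' * y))\<^sup>2 - of_int \<Delta> * (cmod y)\<^sup>2"
    by (simp only: Re_complex_of_real)
  moreover have "Re (a * X) = Re a * hval (a, b, b', c) x y"
    by (simp add: A X_def)
  ultimately show ?thesis by simp
qed

lemma norm_ne_non_norm_times_norm:
  assumes d: "d \<in> {1, 2, 3, 7, 11}" and non_norm: "\<not> (\<exists>\<beta> \<in> Od d. of_int \<Delta> = \<beta> * cnj \<beta>)"
    and u: "u \<in> Od d" and y: "y \<in> Od d" "y \<noteq> 0"
  shows "(cmod u)\<^sup>2 \<noteq> of_int \<Delta> * (cmod y)\<^sup>2"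
proof
  assume eq: "(cmod u)\<^sup>2 = of_int \<Delta> * (cmod y)\<^sup>2"
  have "0 < d" using d by auto
  then obtain k :: nat where k: "(cmod y)\<^sup>2 = of_nat k"
    using Od_cmod_square_nat y(1) by blast
  have "0 < (cmod y)\<^sup>2" using y(2) by simp
  then have "0 < k" unfolding k by simp
  have yy: "y * cnj y = of_nat k"
    by (simp only: complex_norm_square[symmetric] k of_real_of_nat_eq)
  have uu: "u * cnj u = of_int \<Delta> * of_nat k"
    by (simp only: complex_norm_square[symmetric] eq k of_real_mult of_real_of_nat_eq of_real_of_int_eq)
  define \<beta> where "\<beta> = u / y"
  have "\<beta> * cnj \<beta> = of_int \<Delta>"
    using uu yy \<open>0 < k\<close> by (simp add: \<beta>_def field_simps)
  moreover have "of_nat k * \<beta> = u * cnj y"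
    using yy y(2) by (simp add: \<beta>_def field_simps)
  then have "of_nat k * \<beta> \<in> Od d" using u y(1) by (simp add: Od_mult Od_cnj)
  ultimately show False
    using norm_from_K_is_norm_from_Od[OF d \<open>0 < k\<close>] non_norm by blast
qed

lemma Herm_anisotropic:
  assumes d: "d \<in> {1, 2, 3, 7, 11}" and non_norm: "\<not> (\<exists>\<beta> \<in> Od d. of_int \<Delta> = \<beta> * cnj \<beta>)"
    and h: "h \<in> Herm d \<Delta>"
  shows "Od_anisotropic d h"
  unfolding Od_anisotropic_def
proof (intro ballI impI notI)
  fix x y assume x: "x \<in> Od d" and y: "y \<in> Od d" and nonzero: "x \<noteq> 0 \<or> y \<noteq> 0"
    and zero: "hval h x y = 0"
  obtain a b c where h_eq: "h = (a, b, cnj b, c)" and A: "a \<in> \<int>" and b: "b \<in> Od d"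
    and det: "a * c - b * cnj b = - of_int \<Delta>"
    using h unfolding Herm_def by blast
  have "a \<noteq> 0"
    using det b non_norm by auto
  have sq: "(cmod (a * x + cnj b * y))\<^sup>2 = of_int \<Delta> * (cmod y)\<^sup>2"
    using Herm_complete_square[of a b "cnj b" c d \<Delta> x y] h zero by (simp add: h_eq)
  show False
  proof (cases "y = 0")
    case True
    then show False using sq nonzero \<open>a \<noteq> 0\<close> by simp
  next
    case False
    have "a * x + cnj b * y \<in> Od d"
      using A x y b by (auto elim!: Ints_cases intro: Od_add Od_mult Od_cnj Od_of_int_mult)
    then show False
      using norm_ne_non_norm_times_norm[OF d non_norm _ y False] sq by blast
  qed
qed

lemma det_ne_0_linear_system_0:
  fixes r s t v x y :: "'a :: field"
  assumes "r * v - s * t \<noteq> 0" "r * x + s * y = 0" "t * x + v * y = 0"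
  shows "x = 0 \<and> y = 0"
proof -
  have "(r * v - s * t) * x = v * (r * x + s * y) - s * (t * x + v * y)"
   and "(r * v - s * t) * y = r * (t * x + v * y) - t * (r * x + s * y)"
    by (simp_all add: algebra_simps)
  then show ?thesis using assms by simp
qed

lemma Od_anisotropic_act:
  assumes h: "Od_anisotropic d h" and \<sigma>: "\<sigma> \<in> GL2 d"
  shows "Od_anisotropic d (act \<sigma> h)"
  unfolding Od_anisotropic_def
proof (intro ballI impI)
  fix x y assume x: "x \<in> Od d" and y: "y \<in> Od d" and nonzero: "x \<noteq> 0 \<or> y \<noteq> 0"
  obtain r s t v where \<sigma>_eq: "\<sigma> = (r, s, t, v)" by (cases \<sigma>) auto
  have entries: "r \<in> Od d" "s \<in> Od d" "t \<in> Od d" "v \<in> Od d"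
    using \<sigma> by (auto simp: GL2_def \<sigma>_eq)
  have "r * v - s * t \<noteq> 0"
    using \<sigma> by (auto simp: GL2_def is_unit_Od_def \<sigma>_eq)
  then have "cnj r * cnj v - cnj s * cnj t \<noteq> 0"
    by (metis complex_cnj_diff complex_cnj_mult complex_cnj_zero_iff)
  then have "cnj r * x + cnj s * y \<noteq> 0 \<or> cnj t * x + cnj v * y \<noteq> 0"
    using det_ne_0_linear_system_0 nonzero by blast
  moreover have "cnj r * x + cnj s * y \<in> Od d" "cnj t * x + cnj v * y \<in> Od d"
    using entries x y by (auto intro: Od_add Od_mult Od_cnj)
  ultimately show "hval (act \<sigma> h) x y \<noteq> 0"
    using h by (simp add: Od_anisotropic_def \<sigma>_eq hval_act)
qed

section \<open>Continued fraction convergents\<close>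

lemma cfP_Od: "nearest_rounding d rd \<Longrightarrow> cfP rd z k \<in> Od d"
  by (induction rd z k rule: cfP.induct)
    (auto simp: nearest_rounding_def cf_alpha_def intro: Od_add Od_mult Od_0 Od_1)

lemma cfQ_Od: "nearest_rounding d rd \<Longrightarrow> cfQ rd z k \<in> Od d"
  by (induction rd z k rule: cfQ.induct)
    (auto simp: nearest_rounding_def cf_alpha_def intro: Od_add Od_mult Od_0 Od_1)

lemma cfP_cfQ_det: "cfP rd z (Suc k) * cfQ rd z k - cfP rd z k * cfQ rd z (Suc k) = (-1) ^ k"
proof (induction k)
  case (Suc k)
  have "cfP rd z (Suc (Suc k)) * cfQ rd z (Suc k) - cfP rd z (Suc k) * cfQ rd z (Suc (Suc k))
      = - (cfP rd z (Suc k) * cfQ rd z k - cfP rd z k * cfQ rd z (Suc k))"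
    by (simp add: algebra_simps)
  then show ?case using Suc by simp
qed simp

definition cf_error :: "(complex \<Rightarrow> complex) \<Rightarrow> complex \<Rightarrow> nat \<Rightarrow> complex" where
  "cf_error rd z k = cfQ rd z k * z - cfP rd z k"

lemma cf_error_Suc_Suc:
  "cf_defined rd z m \<Longrightarrow>
     cf_error rd z (Suc (Suc m)) = - (cf_z rd z m - cf_alpha rd z m) * cf_error rd z (Suc m)"
proof (induction m)
  case 0
  then show ?case by (simp add: cf_error_def)
next
  case (Suc m)
  have IH: "cf_error rd z (Suc (Suc m)) = - (cf_z rd z m - cf_alpha rd z m) * cf_error rd z (Suc m)"
    using Suc by (simp add: cf_defined_def)
  have nz: "cf_z rd z m - cf_alpha rd z m \<noteq> 0"
    using Suc.prems by (simp add: cf_defined_def)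
  have "cf_error rd z (Suc m) = - cf_z rd z (Suc m) * cf_error rd z (Suc (Suc m))"
    unfolding IH using nz by (simp add: cf_alpha_def field_simps)
  moreover have "cf_error rd z (Suc (Suc (Suc m)))
      = cf_alpha rd z (Suc m) * cf_error rd z (Suc (Suc m)) + cf_error rd z (Suc m)"
    by (simp add: cf_error_def algebra_simps)
  ultimately show ?case by (simp add: algebra_simps)
qed

lemma nearest_rounding_error:
  assumes "d \<in> {1, 2, 3, 7, 11}" "nearest_rounding d rd"
  shows "(cmod (w - rd w))\<^sup>2 \<le> 15/16"
proof -
  obtain \<beta> where "\<beta> \<in> Od d" "(cmod (w - \<beta>))\<^sup>2 \<le> 15/16" using Od_covering[OF assms(1)] by blast
  moreover have "cmod (w - rd w) \<le> cmod (w - \<beta>)"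
    using assms(2) \<open>\<beta> \<in> Od d\<close> by (simp add: nearest_rounding_def)
  then have "(cmod (w - rd w))\<^sup>2 \<le> (cmod (w - \<beta>))\<^sup>2" by (rule power_mono) simp
  ultimately show ?thesis by linarith
qed

lemma cf_error_bound:
  assumes "d \<in> {1, 2, 3, 7, 11}" "nearest_rounding d rd"
  shows "cf_defined rd z m \<Longrightarrow> (cmod (cf_error rd z (Suc (Suc m))))\<^sup>2 \<le> (15/16) ^ Suc m"
proof (induction m)
  case 0
  then show ?case
    using nearest_rounding_error[OF assms, of z] cf_error_Suc_Suc[OF 0]
    by (simp add: cf_error_def cf_alpha_def norm_minus_commute)
next
  case (Suc m)
  have "cf_defined rd z m" using Suc.prems by (simp add: cf_defined_def)
  have "(cmod (cf_error rd z (Suc (Suc (Suc m)))))\<^sup>2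
      = (cmod (cf_z rd z (Suc m) - rd (cf_z rd z (Suc m))))\<^sup>2 * (cmod (cf_error rd z (Suc (Suc m))))\<^sup>2"
    by (simp only: cf_error_Suc_Suc[OF Suc.prems] cf_alpha_def norm_mult norm_minus_cancel power_mult_distrib)
  also have "\<dots> \<le> 15/16 * (15/16) ^ Suc m"
    using nearest_rounding_error[OF assms] Suc.IH[OF \<open>cf_defined rd z m\<close>]
    by (intro mult_mono) auto
  finally show ?case by simp
qed

lemma cf_error_small:
  assumes "d \<in> {1, 2, 3, 7, 11}" "nearest_rounding d rd" "0 < \<epsilon>"
  shows "\<exists>m. cf_defined rd z m \<and> cmod (cf_error rd z (Suc (Suc m))) < \<epsilon>"
proof (cases "\<forall>m. cf_defined rd z m")
  case True
  have "(\<lambda>n. (15/16 :: real) ^ n) \<longlonglongrightarrow> 0" by (rule LIMSEQ_realpow_zero) auto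
  moreover have "0 < \<epsilon>\<^sup>2" using assms(3) by simp
  ultimately have "\<forall>\<^sub>F n in sequentially. (15/16 :: real) ^ n < \<epsilon>\<^sup>2"
    by (rule order_tendstoD(2))
  then obtain N where "(15/16 :: real) ^ Suc N < \<epsilon>\<^sup>2"
    unfolding eventually_sequentially by (meson le_SucI order_refl)
  moreover have "(cmod (cf_error rd z (Suc (Suc N))))\<^sup>2 \<le> (15/16) ^ Suc N"
    using cf_error_bound[OF assms(1,2)] True by blast
  ultimately have "(cmod (cf_error rd z (Suc (Suc N))))\<^sup>2 < \<epsilon>\<^sup>2" by linarith
  then have "cmod (cf_error rd z (Suc (Suc N))) < \<epsilon>"
    by (rule power_less_imp_less_base[OF _ less_imp_le[OF assms(3)]])
  then show ?thesis using True by blast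
next
  case False
  then have "\<exists>k. cf_z rd z k = cf_alpha rd z k" by (auto simp: cf_defined_def)
  then obtain k where "cf_z rd z k = cf_alpha rd z k" and "cf_defined rd z k"
    using exists_least_iff[of "\<lambda>k. cf_z rd z k = cf_alpha rd z k"] by (auto simp: cf_defined_def)
  then have "cf_error rd z (Suc (Suc k)) = 0" by (simp add: cf_error_Suc_Suc)
  then show ?thesis using \<open>cf_defined rd z k\<close> assms(3) by auto
qed

lemma isCont_hval: "isCont (\<lambda>x. hval H x w) z"
proof -
  obtain a b b' c where "H = (a, b, b', c)" by (cases H) auto
  then show ?thesis by (simp add: continuous_intros)
qed

lemma cf_convergent_pos:
  assumes d: "d \<in> {1, 2, 3, 7, 11}" and rd: "nearest_rounding d rd" and hz: "0 < hval h z 1"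
  shows "\<exists>m. cf_defined rd z m \<and> 0 < hval h (cfP rd z (Suc (Suc m))) (cfQ rd z (Suc (Suc m)))"
proof -
  have "((\<lambda>x. hval h x 1) \<longlongrightarrow> hval h z 1) (nhds z)"
    using isCont_hval[where H = h and w = 1 and z = z] unfolding isCont_def
    by (rule tendsto_at_iff_tendsto_nhds[THEN iffD1])
  then have "\<forall>\<^sub>F x in nhds z. 0 < hval h x 1" using hz by (rule order_tendstoD(1))
  then obtain \<delta> where \<delta>: "0 < \<delta>" "\<And>x. dist x z < \<delta> \<Longrightarrow> 0 < hval h x 1"
    unfolding eventually_nhds_metric by blast
  obtain m where m: "cf_defined rd z m" "cmod (cf_error rd z (Suc (Suc m))) < min \<delta> 1"
    using cf_error_small[OF d rd, of "min \<delta> 1" z] \<delta>(1) by auto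
  define p where "p = cfP rd z (Suc (Suc m))"
  define q where "q = cfQ rd z (Suc (Suc m))"
  have err: "cf_error rd z (Suc (Suc m)) = q * z - p" by (simp add: cf_error_def p_def q_def)
  have d0: "0 < d" using d by auto
  have "q \<noteq> 0"
  proof
    assume "q = 0"
    then have "cmod p < 1" using m(2) by (simp add: err)
    then have "p = 0" using Od_norm_ge_1[OF d0 cfP_Od[OF rd], of z "Suc (Suc m)"] by (auto simp: p_def)
    then show False
      using cfP_cfQ_det[of rd z "Suc m"] \<open>q = 0\<close> by (simp add: p_def q_def)
  qed
  then have "1 \<le> cmod q" unfolding q_def by (rule Od_norm_ge_1[OF d0 cfQ_Od[OF rd]])
  have "p / q - z = - (q * z - p) / q" using \<open>q \<noteq> 0\<close> by (simp add: field_simps)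
  then have "dist (p / q) z = cmod (q * z - p) / cmod q"
    by (simp add: dist_norm norm_divide norm_minus_commute)
  also have "\<dots> \<le> cmod (q * z - p)"
    using \<open>1 \<le> cmod q\<close> \<open>q \<noteq> 0\<close> by (intro mult_imp_div_pos_le) (simp_all add: mult_le_cancel_left1)
  also have "\<dots> < \<delta>" using m(2) by (simp add: err)
  finally have "0 < hval h (p / q) 1" by (rule \<delta>(2))
  then have "0 < hval h p q" using hval_div[OF \<open>q \<noteq> 0\<close>, of h p] \<open>q \<noteq> 0\<close> by simp
  then show ?thesis using m(1) by (auto simp: p_def q_def)
qed

lemma cf_sign_change:
  assumes d: "d \<in> {1, 2, 3, 7, 11}" and rd: "nearest_rounding d rd"
    and h: "Od_anisotropic d h" "Re (ha h) < 0" "0 < hval h z 1"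
  shows "\<exists>m. cf_defined rd z m
    \<and> hval h (cfP rd z (Suc m)) (cfQ rd z (Suc m)) < 0
    \<and> 0 < hval h (cfP rd z (Suc (Suc m))) (cfQ rd z (Suc (Suc m)))"
proof -
  define pos where
    "pos m \<longleftrightarrow> cf_defined rd z m \<and> 0 < hval h (cfP rd z (Suc (Suc m))) (cfQ rd z (Suc (Suc m)))"
    for m
  obtain m where "pos m" and below: "\<And>k. k < m \<Longrightarrow> \<not> pos k"
    using cf_convergent_pos[OF d rd h(3)] exists_least_iff[of pos] unfolding pos_def by blast
  have "hval h (cfP rd z (Suc m)) (cfQ rd z (Suc m)) < 0"
  proof (cases m)
    case 0
    then show ?thesis using h(2) by (simp add: hval_1_0)
  next
    case (Suc k)
    have "cf_defined rd z k" using \<open>pos m\<close> Suc by (simp add: pos_def cf_defined_def)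
    then have "hval h (cfP rd z (Suc m)) (cfQ rd z (Suc m)) \<le> 0"
      using below[of k] Suc by (auto simp: pos_def simp del: cfP.simps cfQ.simps)
    moreover have "cfP rd z (Suc m) \<noteq> 0 \<or> cfQ rd z (Suc m) \<noteq> 0"
      using cfP_cfQ_det[of rd z m] by auto
    then have "hval h (cfP rd z (Suc m)) (cfQ rd z (Suc m)) \<noteq> 0"
      using h(1) cfP_Od[OF rd] cfQ_Od[OF rd] by (simp add: Od_anisotropic_def)
    ultimately show ?thesis by simp
  qed
  then show ?thesis using \<open>pos m\<close> by (auto simp: pos_def)
qed

lemma minus_one_power_cases: "(-1 :: 'a :: ring_1) ^ n \<in> {1, -1}"
  by (cases "even n") simp_all

lemma Gamma_z_mdet:
  assumes "\<gamma> \<in> Gamma_z rd z"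
  shows "mdet \<gamma> \<in> {1, -1}"
proof -
  obtain n where "\<gamma> = (cfQ rd z n, - cfP rd z n, - cfQ rd z (Suc n), cfP rd z (Suc n))"
    using assms unfolding Gamma_z_def by blast
  then have "mdet \<gamma> = (-1) ^ n" using cfP_cfQ_det[of rd z n] by (simp add: algebra_simps)
  then show ?thesis by (simp only: minus_one_power_cases)
qed

lemma Gamma_z_mconj_GL2:
  assumes "nearest_rounding d rd" "\<gamma> \<in> Gamma_z rd z"
  shows "mconj \<gamma> \<in> GL2 d"
proof (rule GL2_intro)
  show "entries (mconj \<gamma>) \<subseteq> Od d"
    using assms(2) unfolding Gamma_z_def
    by (auto simp: Od_cnj Od_uminus cfP_Od[OF assms(1)] cfQ_Od[OF assms(1)])
  have "mdet (mconj \<gamma>) = cnj (mdet \<gamma>)" by (cases \<gamma>) simp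
  then show "mdet (mconj \<gamma>) \<in> {1, -1}" using Gamma_z_mdet[OF assms(2)] by auto
qed

section \<open>The map Phi\<close>

lemma hval_ext_mob_None_neg_iff:
  assumes "0 < Re (ha f)"
  shows "hval_ext f (mob (r, s, t, v) None) < 0 \<longleftrightarrow> hval f r t < 0"
proof (cases "t = 0")
  case True
  then show ?thesis using assms by (simp add: hval_x_0 mult_less_0_iff)
next
  case False
  then show ?thesis using hval_div[OF False, of f r] by (simp add: mult_less_0_iff)
qed

lemma hval_ext_mob_Some_pos_iff:
  assumes "0 < Re (ha f)" "r * v - s * t \<noteq> 0"
  shows "0 < hval_ext f (mob (r, s, t, v) (Some z)) \<longleftrightarrow> 0 < hval f (r * z + s) (t * z + v)"
proof (cases "t * z + v = 0")
  case True
  have "t * (r * z + s) - r * (t * z + v) = - (r * v - s * t)" by (simp add: algebra_simps)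
  then have "r * z + s \<noteq> 0" using True assms(2) by auto
  then show ?thesis using True assms(1) by (simp add: hval_x_0)
next
  case False
  then show ?thesis using hval_div[OF False, of f "r * z + s"] by (simp add: zero_less_mult_iff)
qed

lemma hval_ext_mob_signs_iff:
  assumes "0 < Re (ha f)" "mdet \<gamma> \<noteq> 0"
  shows "(hval_ext f (mob \<gamma> None) < 0 \<and> 0 < hval_ext f (mob \<gamma> (Some z)))
    \<longleftrightarrow> (Re (ha (act (mconj \<gamma>) f)) < 0 \<and> 0 < hval (act (mconj \<gamma>) f) z 1)"
proof -
  obtain r s t v where \<gamma>: "\<gamma> = (r, s, t, v)" by (cases \<gamma>) auto
  have "Re (ha (act (mconj \<gamma>) f)) = hval f r t"
    by (simp add: \<gamma> hval_1_0[symmetric] hval_act del: hval_1_0)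
  moreover have "hval (act (mconj \<gamma>) f) z 1 = hval f (r * z + s) (t * z + v)"
    by (simp add: \<gamma> hval_act)
  ultimately show ?thesis
    using assms hval_ext_mob_None_neg_iff hval_ext_mob_Some_pos_iff by (simp add: \<gamma>)
qed

lemma hval_preimage_unimodular:
  assumes h: "h = act (mconj (q1, - p1, - q2, p2)) f" and det: "p2 * q1 - p1 * q2 \<in> {1, -1}"
  shows "Re (ha f) = hval h p2 q2" "hval f 0 1 = hval h p1 q1"
proof -
  define e where "e = p2 * q1 - p1 * q2"
  have e: "e * e = 1" "cmod e = 1" using det by (auto simp: e_def)
  have hval_h: "hval h x y = hval f (q1 * x - p1 * y) (- q2 * x + p2 * y)" for x y
    by (simp add: h hval_act)
  (* (e p2, e q2) and (e p1, e q1) are the preimages of (1, 0) and (0, 1) under conj(gamma)^t. *)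
  have "q1 * (e * p2) - p1 * (e * q2) = e * e" "p2 * (e * q1) - q2 * (e * p1) = e * e"
    by (simp_all add: e_def algebra_simps)
  then have "Re (ha f) = hval h (e * p2) (e * q2)" "hval f 0 1 = hval h (e * p1) (e * q1)"
    using e(1) by (simp_all add: hval_h hval_1_0[symmetric] algebra_simps del: hval_1_0)
  then show "Re (ha f) = hval h p2 q2" "hval f 0 1 = hval h p1 q1"
    using hval_scale[of h e] e(2) by simp_all
qed

lemma Phi_maps_into:
  assumes rd: "nearest_rounding d rd" and f: "f \<in> GL2_orbit d h0" "0 < Re (ha f)"
    and \<gamma>: "\<gamma> \<in> Gamma_z rd z"
    and signs: "hval_ext f (mob \<gamma> None) < 0" "0 < hval_ext f (mob \<gamma> (Some z))"
  shows "act (mconj \<gamma>) f \<in> GL2_orbit d h0 \<and> Re (ha (act (mconj \<gamma>) f)) < 0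
    \<and> 0 < hval (act (mconj \<gamma>) f) z 1"
proof -
  have "mdet \<gamma> \<noteq> 0" using Gamma_z_mdet[OF \<gamma>] by auto
  then show ?thesis
    using GL2_orbit_act[OF f(1) Gamma_z_mconj_GL2[OF rd \<gamma>]] hval_ext_mob_signs_iff[OF f(2)] signs
    by blast
qed

lemma Phi_has_preimage:
  assumes d: "d \<in> {1, 2, 3, 7, 11}" and rd: "nearest_rounding d rd"
    and h: "h \<in> GL2_orbit d h0" "Od_anisotropic d h" "Re (ha h) < 0" "0 < hval h z 1"
  shows "\<exists>f \<gamma>. f \<in> GL2_orbit d h0 \<and> hval f 0 1 < 0 \<and> 0 < Re (ha f) \<and> \<gamma> \<in> Gamma_z rd z
    \<and> hval_ext f (mob \<gamma> None) < 0 \<and> 0 < hval_ext f (mob \<gamma> (Some z)) \<and> h = act (mconj \<gamma>) f"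
proof -
  obtain m where m: "cf_defined rd z m"
    and neg: "hval h (cfP rd z (Suc m)) (cfQ rd z (Suc m)) < 0"
    and pos: "0 < hval h (cfP rd z (Suc (Suc m))) (cfQ rd z (Suc (Suc m)))"
    using cf_sign_change[OF d rd h(2-4)] by blast
  define P1 where "P1 = cfP rd z (Suc m)"
  define Q1 where "Q1 = cfQ rd z (Suc m)"
  define P2 where "P2 = cfP rd z (Suc (Suc m))"
  define Q2 where "Q2 = cfQ rd z (Suc (Suc m))"
  define \<gamma> where "\<gamma> = (Q1, - P1, - Q2, P2)"
  have \<gamma>_Gamma: "\<gamma> \<in> Gamma_z rd z"
    unfolding Gamma_z_def \<gamma>_def P1_def Q1_def P2_def Q2_def
    using m by (intro CollectI exI[of _ "Suc m"]) simp
  obtain \<tau> where \<tau>: "\<tau> \<in> GL2 d" "mmult \<tau> (mconj \<gamma>) = (1, 0, 0, 1)"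
    using GL2_inverse[OF Gamma_z_mconj_GL2[OF rd \<gamma>_Gamma]] by blast
  define f where "f = act \<tau> h"
  have h_eq: "h = act (mconj \<gamma>) f" by (simp add: f_def act_act \<tau>(2) act_id)
  have "P2 * Q1 - P1 * Q2 = (-1) ^ Suc m"
    unfolding P1_def Q1_def P2_def Q2_def by (rule cfP_cfQ_det)
  then have "P2 * Q1 - P1 * Q2 \<in> {1, -1}" by (simp only: minus_one_power_cases)
  then have "Re (ha f) = hval h P2 Q2" "hval f 0 1 = hval h P1 Q1"
    using hval_preimage_unimodular[OF h_eq[unfolded \<gamma>_def]] by simp_all
  then have f_a: "0 < Re (ha f)" and f_c: "hval f 0 1 < 0"
    using pos neg by (simp_all add: P1_def Q1_def P2_def Q2_def)
  have "mdet \<gamma> \<noteq> 0" using Gamma_z_mdet[OF \<gamma>_Gamma] by auto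
  then have "hval_ext f (mob \<gamma> None) < 0 \<and> 0 < hval_ext f (mob \<gamma> (Some z))"
    using hval_ext_mob_signs_iff[OF f_a] h(3,4) h_eq by simp
  moreover have "f \<in> GL2_orbit d h0" unfolding f_def by (rule GL2_orbit_act[OF h(1) \<tau>(1)])
  ultimately show ?thesis using f_a f_c \<gamma>_Gamma h_eq by blast
qed

theorem proposition3p2:
  fixes d :: nat and \<Delta> :: int and z :: complex and rd :: "complex \<Rightarrow> complex"
    and \<A> :: "cmat set"
  assumes "d \<in> {1, 2, 3, 7, 11}"
    and "\<Delta> > 0"
    and "\<not> (\<exists>\<beta> \<in> Od d. of_int \<Delta> = \<beta> * cnj \<beta>)"
    and "nearest_rounding d rd"
    and "\<exists>h0 \<in> Herm d \<Delta>. \<A> = {act \<sigma> h0 | \<sigma>. \<sigma> \<in> GL2 d}"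
  shows
    "(\<lambda>(f, \<gamma>). act (mconj \<gamma>) f) `
        {(f, \<gamma>). f \<in> {h \<in> \<A>. hval h 0 1 < 0 \<and> 0 < Re (ha h)} \<and> \<gamma> \<in> Gamma_z rd z
                   \<and> hval_ext f (mob \<gamma> None) < 0 \<and> 0 < hval_ext f (mob \<gamma> (Some z))}
     = {h \<in> \<A>. Re (ha h) < 0 \<and> 0 < hval h z 1}"
    (is "?\<Phi> ` ?B = ?A")
proof -
  obtain h0 where h0: "h0 \<in> Herm d \<Delta>" and \<A>: "\<A> = GL2_orbit d h0"
    using assms(5) unfolding GL2_orbit_def by blast
  have anisotropic: "Od_anisotropic d h" if "h \<in> GL2_orbit d h0" for h
    using that Od_anisotropic_act[OF Herm_anisotropic[OF assms(1,3) h0]]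
    by (auto simp: GL2_orbit_def)
  show ?thesis
  proof (intro equalityI subsetI)
    fix h assume "h \<in> ?\<Phi> ` ?B"
    then obtain f \<gamma> where "(f, \<gamma>) \<in> ?B" and "h = ?\<Phi> (f, \<gamma>)" by blast
    then show "h \<in> ?A" using Phi_maps_into[OF assms(4), of f h0 \<gamma> z] by (simp add: \<A>)
  next
    fix h assume "h \<in> ?A"
    then have h: "h \<in> GL2_orbit d h0" "Re (ha h) < 0" "0 < hval h z 1" by (simp_all add: \<A>)
    then obtain f \<gamma> where "f \<in> GL2_orbit d h0" "hval f 0 1 < 0" "0 < Re (ha f)" "\<gamma> \<in> Gamma_z rd z"
      "hval_ext f (mob \<gamma> None) < 0" "0 < hval_ext f (mob \<gamma> (Some z))" "h = act (mconj \<gamma>) f"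
      using Phi_has_preimage[OF assms(1,4) h(1) anisotropic[OF h(1)] h(2,3)] by blast
    then show "h \<in> ?\<Phi> ` ?B" by (intro image_eqI[of _ _ "(f, \<gamma>)"]) (simp_all add: \<A>)
  qed
qed

end
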